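(* Let $\alpha\in\ell^\infty_w$ satisfy $G_{\tilde\psi,\psi}\alpha=\alpha$. Then there exists $f\in\mathcal H^\infty_w$ with $C_{\tilde\psi}f=\alpha$, i.e. $\alpha\in R(C_{\tilde\psi})$.
   Context: Standing setting. $\mathcal H$ is a separable complex Hilbert space with inner product $\langle\cdot,\cdot\rangle$, linear in the first and conjugate-linear in the second argument. $X$ is a countable index set. A weight is a map $w:X\to(0,\infty)$; $\ell^\infty_w$ is the Banach space of sequences $\alpha=(\alpha_k)_{k\in X}$ with $\|\alpha\|_{\ell^\infty_w}:=\sup_{k\in X}|\alpha_k|w(k)<\infty$. $\psi=(\psi_k)_{k\in X}$ is a frame for $\mathcal H$ and $\tilde\psi=(\tilde\psi_k)_{k\in X}$ is a dual frame, i.e. $f=\sum_{k}\langle f,\tilde\psi_k\rangle\psi_k=\sum_k\langle f,\psi_k\rangle\tilde\psi_k$ for all $f\in\mathcal H$ (unconditional convergence in $\mathcal H$). The cross Gram matrix $G_{\tilde\psi,\psi}$ has entries $(G_{\tilde\psi,\psi})_{k,l}=\langle\psi_l,\tilde\psi_k\rangle$ and acts by $(G_{\tilde\psi,\psi}\alpha)_k=\sum_{l\in X}\langle\psi_l,\tilde\psi_k\rangle\alpha_l$; it is assumed to define a bounded operator on $\ell^\infty_w$, meaning these series converge absolutely for every $\alpha\in\ell^\infty_w$ and $G_{\tilde\psi,\psi}:\ell^\infty_w\to\ell^\infty_w$ is bounded (equivalently $\|G_{\tilde\psi,\psi}\|_{\mathcal B(\ell^\infty_w)}=\sup_{k}\sum_{l}|\langle\psi_l,\tilde\psi_k\rangle|\,w(k)/w(l)<\infty$).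 Let $\mathcal H^{00}:=\operatorname{span}\{\tilde\psi_k:k\in X\}$ (finite linear combinations), a dense subspace of $\mathcal H$. Equip $\mathcal H$ with the locally convex topology $\sigma(\mathcal H,\mathcal H^{00})$ generated by the seminorms $f\mapsto|\langle f,v\rangle|$, $v\in\mathcal H^{00}$ (Hausdorff and metrizable). Let $\overline{\mathcal H}$ be the completion of $\mathcal H$ in this topology, with $\mathcal H\subseteq\overline{\mathcal H}$, and for each $v\in\mathcal H^{00}$ let $f\mapsto\langle f,v\rangle_{\overline{\mathcal H},\mathcal H^{00}}$ be the unique continuous linear extension of $f\mapsto\langle f,v\rangle$ to $\overline{\mathcal H}$. Define $\mathcal H^\infty_w$ as the set of all $f\in\overline{\mathcal H}$ for which there is a sequence $(f_n)_{n\ge1}\subseteq\mathcal H$ converging to $f$ in $\sigma(\overline{\mathcal H},\mathcal H^{00})$ (i.e. $\langle f_n,v\rangle\to\langle f,v\rangle_{\overline{\mathcal H},\mathcal H^{00}}$ for all $v\in\mathcal H^{00}$) with $\sup_{n\in\mathbb N,k\in X}|\langle f_n,\tilde\psi_k\rangle|w(k)<\infty$. The coefficient operator is $C_{\tilde\psi}:\mathcal H^\infty_w\to\ell^\infty_w$, $C_{\tilde\psi}f=(\langle f,\tilde\psi_k\rangle_{\overline{\mathcal H},\mathcal H^{00}})_{k\in X}$, and $R(C_{\tilde\psi})$ denotes its range. *)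

theory Defs
  imports "HOL-Analysis.Analysis"
begin

definition hnorm :: "('h \<Rightarrow> 'h \<Rightarrow> complex) \<Rightarrow> 'h \<Rightarrow> real" where
  "hnorm ip x = sqrt (Re (ip x x))"

definition complex_hilbert ::
  "(complex \<Rightarrow> 'h::ab_group_add \<Rightarrow> 'h) \<Rightarrow> ('h \<Rightarrow> 'h \<Rightarrow> complex) \<Rightarrow> bool" where
  "complex_hilbert sc ip \<longleftrightarrow>
     (\<forall>x. sc 1 x = x) \<and>
     (\<forall>a b x. sc a (sc b x) = sc (a * b) x) \<and>
     (\<forall>a x y. sc a (x + y) = sc a x + sc a y) \<and>
     (\<forall>a b x. sc (a + b) x = sc a x + sc b x) \<and>
     (\<forall>x y z. ip (x + y) z = ip x z + ip y z) \<and>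
     (\<forall>a x y. ip (sc a x) y = a * ip x y) \<and>
     (\<forall>x y. ip y x = cnj (ip x y)) \<and>
     (\<forall>x. 0 \<le> Re (ip x x)) \<and>
     (\<forall>x. ip x x = 0 \<longrightarrow> x = 0) \<and>
     (\<forall>xs :: nat \<Rightarrow> 'h.
        (\<forall>e>0. \<exists>N. \<forall>m\<ge>N. \<forall>n\<ge>N. hnorm ip (xs m - xs n) < e) \<longrightarrow>
        (\<exists>x. (\<lambda>n. hnorm ip (xs n - x)) \<longlonglongrightarrow> 0)) \<and>
     (\<exists>D. countable D \<and> (\<forall>x e. e > 0 \<longrightarrow> (\<exists>d\<in>D. hnorm ip (x - d) < e)))"

text \<open>Unconditional convergence in H of the series sum_k c_k psi_k to f
  (convergence of the net of finite partial sums).\<close>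
definition hsums ::
  "(complex \<Rightarrow> 'h::ab_group_add \<Rightarrow> 'h) \<Rightarrow> ('h \<Rightarrow> 'h \<Rightarrow> complex) \<Rightarrow>
   ('i \<Rightarrow> complex) \<Rightarrow> ('i \<Rightarrow> 'h) \<Rightarrow> 'h \<Rightarrow> bool" where
  "hsums sc ip c \<psi> f \<longleftrightarrow>
     (\<forall>e>0. \<exists>F. finite F \<and>
        (\<forall>G. finite G \<and> F \<subseteq> G \<longrightarrow> hnorm ip (f - (\<Sum>k\<in>G. sc (c k) (\<psi> k))) < e))"

definition is_frame :: "('h \<Rightarrow> 'h \<Rightarrow> complex) \<Rightarrow> ('i \<Rightarrow> 'h) \<Rightarrow> bool" where
  "is_frame ip \<psi> \<longleftrightarrow>
     (\<exists>A B. 0 < A \<and> 0 < B \<and>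
        (\<forall>f. (\<lambda>k. (cmod (ip f (\<psi> k)))\<^sup>2) summable_on UNIV \<and>
             A * (hnorm ip f)\<^sup>2 \<le> (\<Sum>\<^sub>\<infinity>k. (cmod (ip f (\<psi> k)))\<^sup>2) \<and>
             (\<Sum>\<^sub>\<infinity>k. (cmod (ip f (\<psi> k)))\<^sup>2) \<le> B * (hnorm ip f)\<^sup>2))"

definition is_dual_frame ::
  "(complex \<Rightarrow> 'h::ab_group_add \<Rightarrow> 'h) \<Rightarrow> ('h \<Rightarrow> 'h \<Rightarrow> complex) \<Rightarrow>
   ('i \<Rightarrow> 'h) \<Rightarrow> ('i \<Rightarrow> 'h) \<Rightarrow> bool" where
  "is_dual_frame sc ip \<psi> \<psi>d \<longleftrightarrow>
     is_frame ip \<psi> \<and> is_frame ip \<psi>d \<and>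
     (\<forall>f. hsums sc ip (\<lambda>k. ip f (\<psi>d k)) \<psi> f \<and> hsums sc ip (\<lambda>k. ip f (\<psi> k)) \<psi>d f)"

definition linf_w :: "('i \<Rightarrow> real) \<Rightarrow> ('i \<Rightarrow> complex) set" where
  "linf_w w = {\<alpha>. \<exists>M. \<forall>k. cmod (\<alpha> k) * w k \<le> M}"

definition gram :: "('h \<Rightarrow> 'h \<Rightarrow> complex) \<Rightarrow> ('i \<Rightarrow> 'h) \<Rightarrow> ('i \<Rightarrow> 'h) \<Rightarrow> 'i \<Rightarrow> 'i \<Rightarrow> complex" where
  "gram ip \<psi>d \<psi> k l = ip (\<psi> l) (\<psi>d k)"

definition gram_apply ::
  "('h \<Rightarrow> 'h \<Rightarrow> complex) \<Rightarrow> ('i \<Rightarrow> 'h) \<Rightarrow> ('i \<Rightarrow> 'h) \<Rightarrow> ('i \<Rightarrow> complex) \<Rightarrow> 'i \<Rightarrow> complex" where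
  "gram_apply ip \<psi>d \<psi> \<alpha> k = (\<Sum>\<^sub>\<infinity>l. gram ip \<psi>d \<psi> k l * \<alpha> l)"

text \<open>G is a bounded operator on l^infty_w: sup_k sum_l |G_kl| w(k)/w(l) < infinity.\<close>
definition gram_bounded_w ::
  "('h \<Rightarrow> 'h \<Rightarrow> complex) \<Rightarrow> ('i \<Rightarrow> 'h) \<Rightarrow> ('i \<Rightarrow> 'h) \<Rightarrow> ('i \<Rightarrow> real) \<Rightarrow> bool" where
  "gram_bounded_w ip \<psi>d \<psi> w \<longleftrightarrow>
     (\<exists>M. \<forall>k. (\<lambda>l. cmod (gram ip \<psi>d \<psi> k l) * w k / w l) summable_on UNIV \<and>
              (\<Sum>\<^sub>\<infinity>l. cmod (gram ip \<psi>d \<psi> k l) * w k / w l) \<le> M)"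

definition H00 :: "(complex \<Rightarrow> 'h::ab_group_add \<Rightarrow> 'h) \<Rightarrow> ('i \<Rightarrow> 'h) \<Rightarrow> 'h set" where
  "H00 sc \<psi>d = {v. \<exists>F c. finite F \<and> v = (\<Sum>k\<in>F. sc (c k) (\<psi>d k))}"

text \<open>Model of the completion of H in sigma(H,H^00): the algebraic space of
  conjugate-linear functionals on H^00 (extended by 0 outside H^00); the pairing
  <Phi, v> is Phi v, and f in H is embedded as v |-> <f,v>.\<close>
definition Hbar :: "(complex \<Rightarrow> 'h::ab_group_add \<Rightarrow> 'h) \<Rightarrow> ('i \<Rightarrow> 'h) \<Rightarrow> ('h \<Rightarrow> complex) set" where
  "Hbar sc \<psi>d = {\<Phi>. (\<forall>u\<in>H00 sc \<psi>d. \<forall>v\<in>H00 sc \<psi>d. \<Phi> (u + v) = \<Phi> u + \<Phi> v) \<and>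
                    (\<forall>a. \<forall>v\<in>H00 sc \<psi>d. \<Phi> (sc a v) = cnj a * \<Phi> v) \<and>
                    (\<forall>v. v \<notin> H00 sc \<psi>d \<longrightarrow> \<Phi> v = 0)}"

definition embed_H :: "(complex \<Rightarrow> 'h::ab_group_add \<Rightarrow> 'h) \<Rightarrow> ('h \<Rightarrow> 'h \<Rightarrow> complex) \<Rightarrow>
   ('i \<Rightarrow> 'h) \<Rightarrow> 'h \<Rightarrow> 'h \<Rightarrow> complex" where
  "embed_H sc ip \<psi>d f = (\<lambda>v. if v \<in> H00 sc \<psi>d then ip f v else 0)"

definition Hinf_w :: "(complex \<Rightarrow> 'h::ab_group_add \<Rightarrow> 'h) \<Rightarrow> ('h \<Rightarrow> 'h \<Rightarrow> complex) \<Rightarrow>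
   ('i \<Rightarrow> 'h) \<Rightarrow> ('i \<Rightarrow> real) \<Rightarrow> ('h \<Rightarrow> complex) set" where
  "Hinf_w sc ip \<psi>d w = {\<Phi> \<in> Hbar sc \<psi>d. \<exists>fs :: nat \<Rightarrow> 'h.
      (\<forall>v\<in>H00 sc \<psi>d. (\<lambda>n. ip (fs n) v) \<longlonglongrightarrow> \<Phi> v) \<and>
      (\<exists>M. \<forall>n k. cmod (ip (fs n) (\<psi>d k)) * w k \<le> M)}"

definition coeff_op :: "('i \<Rightarrow> 'h) \<Rightarrow> ('h \<Rightarrow> complex) \<Rightarrow> 'i \<Rightarrow> complex" where
  "coeff_op \<psi>d \<Phi> = (\<lambda>k. \<Phi> (\<psi>d k))"

end

theory Submission
  imports Defs
begin

text \<open>Exhaust the countable index set by finite sets \<open>F\<^sub>n\<close> and let \<open>f\<^sub>n\<close> be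
  the partial sum of \<open>\<Sum>\<^sub>l \<alpha>\<^sub>l \<psi>\<^sub>l\<close> over \<open>F\<^sub>n\<close>. Then \<open>\<langle>f\<^sub>n, \<psi>d\<^sub>k\<rangle>\<close> is a partial sum of
  the absolutely convergent series \<open>(G\<alpha>)\<^sub>k = \<alpha>\<^sub>k\<close>, so the coefficients of \<open>f\<^sub>n\<close>
  converge to \<open>\<alpha>\<close> and are bounded in \<open>\<ell>\<^sup>\<infinity>\<^sub>w\<close> by \<open>\<parallel>G\<parallel> \<parallel>\<alpha>\<parallel>\<close>. Since every
  \<open>v \<in> H\<^sup>0\<^sup>0\<close> is a finite combination of the \<open>\<psi>d\<^sub>k\<close>, \<open>\<langle>f\<^sub>n, v\<rangle>\<close> converges as well,
  and the limit functional is the required element of \<open>H\<^sup>\<infinity>\<^sub>w\<close>.\<close>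

context
  fixes sc :: "complex \<Rightarrow> 'h::ab_group_add \<Rightarrow> 'h" and ip :: "'h \<Rightarrow> 'h \<Rightarrow> complex"
    and \<psi>d :: "'i \<Rightarrow> 'h"
  assumes hilbert: "complex_hilbert sc ip"
begin

lemma ip_add_left: "ip (x + y) z = ip x z + ip y z"
  using hilbert unfolding complex_hilbert_def by (elim conjE allE) assumption

lemma ip_sc_left: "ip (sc a x) y = a * ip x y"
  using hilbert unfolding complex_hilbert_def by (elim conjE allE) assumption

lemma ip_commute: "ip y x = cnj (ip x y)"
  using hilbert unfolding complex_hilbert_def by (elim conjE allE) assumption

lemma sc_one: "sc 1 x = x"
  using hilbert unfolding complex_hilbert_def by (elim conjE allE) assumption

lemma sc_sc: "sc a (sc b x) = sc (a * b) x"
  using hilbert unfolding complex_hilbert_def by (elim conjE allE) assumption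

lemma sc_add_right: "sc a (x + y) = sc a x + sc a y"
  using hilbert unfolding complex_hilbert_def by (elim conjE allE) assumption

lemma sc_add_left: "sc (a + b) x = sc a x + sc b x"
  using hilbert unfolding complex_hilbert_def by (elim conjE allE) assumption

lemma ip_add_right: "ip x (y + z) = ip x y + ip x z"
  by (metis ip_add_left ip_commute complex_cnj_add)

lemma ip_sc_right: "ip x (sc a y) = cnj a * ip x y"
  by (metis ip_sc_left ip_commute complex_cnj_mult)

lemma sc_zero_left: "sc 0 x = 0"
  using sc_add_left[of 0 0 x] by simp

lemma sc_zero_right: "sc a 0 = 0"
  using sc_add_right[of a 0 0] by simp

lemma ip_zero_left: "ip 0 x = 0"
  using ip_add_left[of 0 0 x] by simp

lemma ip_zero_right: "ip x 0 = 0"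
  using ip_add_right[of x 0 0] by simp

lemma sc_sum: "sc a (\<Sum>k\<in>F. g k) = (\<Sum>k\<in>F. sc a (g k))"
  by (induction F rule: infinite_finite_induct) (simp_all add: sc_zero_right sc_add_right)

lemma ip_sum_left: "ip (\<Sum>k\<in>F. g k) x = (\<Sum>k\<in>F. ip (g k) x)"
  by (induction F rule: infinite_finite_induct) (simp_all add: ip_zero_left ip_add_left)

lemma ip_sum_right: "ip x (\<Sum>k\<in>F. g k) = (\<Sum>k\<in>F. ip x (g k))"
  by (induction F rule: infinite_finite_induct) (simp_all add: ip_zero_right ip_add_right)

lemma ip_synthesis_gram:
  "ip (\<Sum>l\<in>F. sc (\<alpha> l) (\<psi> l)) (\<psi>d k) = (\<Sum>l\<in>F. gram ip \<psi>d \<psi> k l * \<alpha> l)"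
  by (simp add: ip_sum_left ip_sc_left gram_def mult.commute)

lemma dual_mem_H00: "\<psi>d k \<in> H00 sc \<psi>d"
  unfolding H00_def
  by (intro CollectI exI[of _ "{k}"] exI[of _ "\<lambda>_. 1"]) (simp add: sc_one)

lemma H00_sc:
  assumes "v \<in> H00 sc \<psi>d"
  shows "sc a v \<in> H00 sc \<psi>d"
proof -
  obtain F c where "finite F" and v: "v = (\<Sum>k\<in>F. sc (c k) (\<psi>d k))"
    using assms unfolding H00_def by blast
  then show ?thesis unfolding H00_def
    by (intro CollectI exI[of _ F] exI[of _ "\<lambda>k. a * c k"]) (simp add: sc_sum sc_sc)
qed

lemma H00_add:
  assumes "u \<in> H00 sc \<psi>d" "v \<in> H00 sc \<psi>d"
  shows "u + v \<in> H00 sc \<psi>d"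
proof -
  obtain F c G d where FG: "finite F" "finite G"
    and u: "u = (\<Sum>k\<in>F. sc (c k) (\<psi>d k))" and v: "v = (\<Sum>k\<in>G. sc (d k) (\<psi>d k))"
    using assms unfolding H00_def by blast
  define extend :: "('i \<Rightarrow> complex) \<Rightarrow> 'i set \<Rightarrow> 'i \<Rightarrow> complex"
    where "extend e A k = (if k \<in> A then e k else 0)" for e A k
  have sum_extend: "(\<Sum>k\<in>A. sc (e k) (\<psi>d k)) = (\<Sum>k\<in>F \<union> G. sc (extend e A k) (\<psi>d k))"
    if "A \<subseteq> F \<union> G" for A e
    using that FG by (intro sum.mono_neutral_cong_left) (auto simp: extend_def sc_zero_left)
  have "u + v = (\<Sum>k\<in>F \<union> G. sc (extend c F k + extend d G k) (\<psi>d k))"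
    using sum_extend[of F c] sum_extend[of G d] by (simp add: u v sc_add_left sum.distrib)
  then show ?thesis using FG unfolding H00_def
    by (intro CollectI exI[of _ "F \<union> G"] exI[of _ "\<lambda>k. extend c F k + extend d G k"]) simp
qed

end

lemma finite_to_nat_lessThan: "finite (to_nat -` {..<n} :: 'i::countable set)"
  by (intro finite_vimageI) (simp_all add: inj_to_nat)

lemma filterlim_to_nat_lessThan:
  "filterlim (\<lambda>n. to_nat -` {..<n}) (finite_subsets_at_top (UNIV :: 'i::countable set)) sequentially"
  unfolding filterlim_finite_subsets_at_top subset_UNIV[THEN eqTrueI] simp_thms
proof (intro allI impI)
  fix X :: "'i set"
  assume "finite X"
  have X_subset: "X \<subseteq> to_nat -` {..<n}" if "n > Max (to_nat ` X)" for n
  proof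
    fix x
    assume "x \<in> X"
    with \<open>finite X\<close> have "to_nat x \<le> Max (to_nat ` X)" by simp
    with that show "x \<in> to_nat -` {..<n}" by simp
  qed
  show "\<forall>\<^sub>F n in sequentially. finite (to_nat -` {..<n}) \<and> X \<subseteq> to_nat -` {..<n}"
    by (rule eventually_mono[OF eventually_gt_at_top[of "Max (to_nat ` X)"]])
      (simp add: finite_to_nat_lessThan X_subset)
qed

lemma has_sum_to_nat_lessThan:
  fixes f :: "'i::countable \<Rightarrow> 'a::topological_comm_monoid_add"
  assumes "(f has_sum S) UNIV"
  shows "(\<lambda>n. \<Sum>l\<in>to_nat -` {..<n}. f l) \<longlonglongrightarrow> S"
  using filterlim_compose[OF assms[unfolded has_sum_def] filterlim_to_nat_lessThan] by simp

lemma norm_mult_le_weighted: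
  fixes g a :: "'a::real_normed_div_algebra"
  assumes "0 \<le> u" "0 < v" "norm a * v \<le> A"
  shows "norm (g * a) * u \<le> norm g * u / v * A"
proof -
  have "norm (g * a) * u = norm g * u / v * (norm a * v)"
    using \<open>0 < v\<close> by (simp add: norm_mult field_simps)
  also have "\<dots> \<le> norm g * u / v * A"
    using assms by (intro mult_left_mono) auto
  finally show ?thesis .
qed

context
  fixes ip :: "'h \<Rightarrow> 'h \<Rightarrow> complex" and \<psi> \<psi>d :: "'i \<Rightarrow> 'h"
    and w :: "'i \<Rightarrow> real" and \<alpha> :: "'i \<Rightarrow> complex" and A :: real
  assumes w_pos: "\<And>k. 0 < w k"
    and gram_row_summable: "\<And>k. (\<lambda>l. cmod (gram ip \<psi>d \<psi> k l) * w k / w l) summable_on UNIV"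
    and \<alpha>_bound: "\<And>l. cmod (\<alpha> l) * w l \<le> A"
begin

lemma gram_row_mult_summable: "(\<lambda>l. gram ip \<psi>d \<psi> k l * \<alpha> l) summable_on UNIV"
proof (rule abs_summable_summable)
  have "norm (gram ip \<psi>d \<psi> k l * \<alpha> l) \<le> cmod (gram ip \<psi>d \<psi> k l) * w k / w l * A / w k" for l
    using w_pos[of k] w_pos[of l] \<alpha>_bound[of l]
    by (intro pos_le_divide_eq[THEN iffD2] norm_mult_le_weighted) auto
  then show "(\<lambda>l. norm (gram ip \<psi>d \<psi> k l * \<alpha> l)) summable_on UNIV"
    by (intro summable_on_comparison_test[OF summable_on_cmult_left[OF gram_row_summable, of k "A / w k"]])
      (auto simp: w_pos less_imp_le)
qed

lemma gram_partial_sum_bound: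
  assumes gram_row_bound: "(\<Sum>\<^sub>\<infinity>l. cmod (gram ip \<psi>d \<psi> k l) * w k / w l) \<le> M"
    and "finite F"
  shows "cmod (\<Sum>l\<in>F. gram ip \<psi>d \<psi> k l * \<alpha> l) * w k \<le> M * A"
proof -
  let ?c = "\<lambda>l. cmod (gram ip \<psi>d \<psi> k l) * w k / w l"
  have c_nonneg: "0 \<le> ?c l" for l
    using w_pos[of k] w_pos[of l] by simp
  have A_nonneg: "0 \<le> A"
    using \<alpha>_bound[of k] w_pos[of k] by (meson less_imp_le mult_nonneg_nonneg norm_ge_zero order_trans)
  have "cmod (\<Sum>l\<in>F. gram ip \<psi>d \<psi> k l * \<alpha> l) * w k \<le> (\<Sum>l\<in>F. cmod (gram ip \<psi>d \<psi> k l * \<alpha> l) * w k)"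
    unfolding sum_distrib_right[symmetric] using w_pos[of k] by (intro mult_right_mono norm_sum) auto
  also have "\<dots> \<le> (\<Sum>l\<in>F. ?c l * A)"
    using w_pos \<alpha>_bound by (intro sum_mono norm_mult_le_weighted) (auto intro: less_imp_le)
  also have "\<dots> = (\<Sum>l\<in>F. ?c l) * A"
    by (simp add: sum_distrib_right)
  also have "\<dots> \<le> (\<Sum>\<^sub>\<infinity>l. ?c l) * A"
    using \<open>finite F\<close> c_nonneg A_nonneg by (intro mult_right_mono finite_sum_le_infsum gram_row_summable) auto
  also have "\<dots> \<le> M * A"
    using gram_row_bound A_nonneg by (intro mult_right_mono)
  finally show ?thesis .
qed

end

definition sigma_lim ::
  "(complex \<Rightarrow> 'h::ab_group_add \<Rightarrow> 'h) \<Rightarrow> ('h \<Rightarrow> 'h \<Rightarrow> complex) \<Rightarrow> ('i \<Rightarrow> 'h) \<Rightarrow> (nat \<Rightarrow> 'h) \<Rightarrow> 'h \<Rightarrow> complex"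
  where "sigma_lim sc ip \<psi>d fs v = (if v \<in> H00 sc \<psi>d then lim (\<lambda>n. ip (fs n) v) else 0)"

context
  fixes sc :: "complex \<Rightarrow> 'h::ab_group_add \<Rightarrow> 'h" and ip :: "'h \<Rightarrow> 'h \<Rightarrow> complex"
    and \<psi>d :: "'i \<Rightarrow> 'h" and fs :: "nat \<Rightarrow> 'h" and \<beta> :: "'i \<Rightarrow> complex"
  assumes hilbert: "complex_hilbert sc ip"
    and coeff_tendsto: "\<And>k. (\<lambda>n. ip (fs n) (\<psi>d k)) \<longlonglongrightarrow> \<beta> k"
begin

lemma tendsto_sigma_lim:
  assumes "v \<in> H00 sc \<psi>d"
  shows "(\<lambda>n. ip (fs n) v) \<longlonglongrightarrow> sigma_lim sc ip \<psi>d fs v"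
proof -
  obtain F c where v: "v = (\<Sum>k\<in>F. sc (c k) (\<psi>d k))"
    using assms unfolding H00_def by blast
  have "(\<lambda>n. \<Sum>k\<in>F. cnj (c k) * ip (fs n) (\<psi>d k)) \<longlonglongrightarrow> (\<Sum>k\<in>F. cnj (c k) * \<beta> k)"
    by (intro tendsto_sum tendsto_mult_left coeff_tendsto)
  then have "convergent (\<lambda>n. ip (fs n) v)"
    unfolding v by (simp add: ip_sum_right[OF hilbert] ip_sc_right[OF hilbert] convergentI)
  then show ?thesis
    using assms by (simp add: sigma_lim_def convergent_LIMSEQ_iff)
qed

lemma sigma_lim_in_Hbar: "sigma_lim sc ip \<psi>d fs \<in> Hbar sc \<psi>d"
  unfolding Hbar_def
proof (intro CollectI conjI ballI allI impI)
  fix u v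
  assume uv: "u \<in> H00 sc \<psi>d" "v \<in> H00 sc \<psi>d"
  have "(\<lambda>n. ip (fs n) (u + v)) \<longlonglongrightarrow> sigma_lim sc ip \<psi>d fs u + sigma_lim sc ip \<psi>d fs v"
    using tendsto_add[OF tendsto_sigma_lim[OF uv(1)] tendsto_sigma_lim[OF uv(2)]]
    by (simp add: ip_add_right[OF hilbert])
  with tendsto_sigma_lim[OF H00_add[OF hilbert uv]]
  show "sigma_lim sc ip \<psi>d fs (u + v) = sigma_lim sc ip \<psi>d fs u + sigma_lim sc ip \<psi>d fs v"
    by (rule LIMSEQ_unique)
next
  fix a v
  assume v: "v \<in> H00 sc \<psi>d"
  have "(\<lambda>n. ip (fs n) (sc a v)) \<longlonglongrightarrow> cnj a * sigma_lim sc ip \<psi>d fs v"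
    using tendsto_mult_left[OF tendsto_sigma_lim[OF v], of "cnj a"]
    by (simp add: ip_sc_right[OF hilbert])
  with tendsto_sigma_lim[OF H00_sc[OF hilbert v]]
  show "sigma_lim sc ip \<psi>d fs (sc a v) = cnj a * sigma_lim sc ip \<psi>d fs v"
    by (rule LIMSEQ_unique)
qed (simp add: sigma_lim_def)

lemma coeff_op_sigma_lim: "coeff_op \<psi>d (sigma_lim sc ip \<psi>d fs) = \<beta>"
  unfolding coeff_op_def
  by (intro ext LIMSEQ_unique[OF tendsto_sigma_lim[OF dual_mem_H00[OF hilbert]] coeff_tendsto])

lemma sigma_lim_in_Hinf_w:
  assumes "\<And>n k. cmod (ip (fs n) (\<psi>d k)) * w k \<le> C"
  shows "sigma_lim sc ip \<psi>d fs \<in> Hinf_w sc ip \<psi>d w"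
  unfolding Hinf_w_def using sigma_lim_in_Hbar tendsto_sigma_lim assms by blast

end

theorem mainTheorem8:
  fixes sc :: "complex \<Rightarrow> 'h::ab_group_add \<Rightarrow> 'h"
    and ip :: "'h \<Rightarrow> 'h \<Rightarrow> complex"
    and \<psi> \<psi>d :: "'i::countable \<Rightarrow> 'h"
    and w :: "'i \<Rightarrow> real"
    and \<alpha> :: "'i \<Rightarrow> complex"
  assumes "complex_hilbert sc ip"
    and "\<forall>k. 0 < w k"
    and "is_dual_frame sc ip \<psi> \<psi>d"
    and "gram_bounded_w ip \<psi>d \<psi> w"
    and "\<alpha> \<in> linf_w w"
    and "\<forall>k. gram_apply ip \<psi>d \<psi> \<alpha> k = \<alpha> k"
  shows "\<exists>f \<in> Hinf_w sc ip \<psi>d w. coeff_op \<psi>d f = \<alpha>"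
proof -
  obtain M where gram_row: "\<And>k. (\<lambda>l. cmod (gram ip \<psi>d \<psi> k l) * w k / w l) summable_on UNIV"
      "\<And>k. (\<Sum>\<^sub>\<infinity>l. cmod (gram ip \<psi>d \<psi> k l) * w k / w l) \<le> M"
    using assms(4) unfolding gram_bounded_w_def by blast
  obtain A where \<alpha>_bound: "\<And>l. cmod (\<alpha> l) * w l \<le> A"
    using assms(5) unfolding linf_w_def by blast
  note gram_facts = assms(2)[rule_format] gram_row(1) \<alpha>_bound
  define fs where "fs n = (\<Sum>l\<in>to_nat -` {..<n}. sc (\<alpha> l) (\<psi> l))" for n
  have coeff_fs: "ip (fs n) (\<psi>d k) = (\<Sum>l\<in>to_nat -` {..<n}. gram ip \<psi>d \<psi> k l * \<alpha> l)" for n k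
    unfolding fs_def by (rule ip_synthesis_gram[OF assms(1)])
  have "(\<lambda>n. ip (fs n) (\<psi>d k)) \<longlonglongrightarrow> \<alpha> k" for k
  proof -
    have "((\<lambda>l. gram ip \<psi>d \<psi> k l * \<alpha> l) has_sum \<alpha> k) UNIV"
      using has_sum_infsum[OF gram_row_mult_summable[OF gram_facts]] assms(6)
      by (simp add: gram_apply_def)
    then show ?thesis
      unfolding coeff_fs by (rule has_sum_to_nat_lessThan)
  qed
  moreover have "cmod (ip (fs n) (\<psi>d k)) * w k \<le> M * A" for n k
    unfolding coeff_fs by (intro gram_partial_sum_bound[OF gram_facts gram_row(2)] finite_to_nat_lessThan)
  ultimately show ?thesis
    using sigma_lim_in_Hinf_w[OF assms(1)] coeff_op_sigma_lim[OF assms(1)] by blast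
qed

end
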